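(* In the algebra $\mathcal O_q$ defined in the context, for all $n\in\mathbb N$: $$\mathcal W_{n+1}=-(q-q^{-1})^{-1}\sum_{k=0}^n\sum_{\ell=0}^k\binom{k}{\ell}q^{2\ell-k}[2]_q^{-k-2}\mathcal G_{n-k}\tilde B_{(k-2\ell)\delta+\alpha_0},$$ $$\mathcal W_{-n}=-(q-q^{-1})^{-1}\sum_{k=0}^n\sum_{\ell=0}^k\binom{k}{\ell}q^{k-2\ell}[2]_q^{-k-2}\mathcal G_{n-k}\tilde B_{(k-2\ell)\delta+\alpha_1}.$$
   Context: All algebras are associative and unital over a field $\mathbb F$; $q\in\mathbb F$ is nonzero and not a root of unity; $[n]_q=(q^n-q^{-n})/(q-q^{-1})$. For elements $X,Y$ of an algebra, $[X,Y]=XY-YX$ and $[X,Y]_q=qXY-q^{-1}YX$. Let $\rho=-(q^2-q^{-2})^2$. The algebra $\mathcal O_q$ is defined by generators $\mathcal W_{-k},\mathcal W_{k+1},\mathcal G_{k+1},\tilde{\mathcal G}_{k+1}$ ($k\in\mathbb N$) and the following relations for all $k,\ell\in\mathbb N$: $[\mathcal W_0,\mathcal W_{k+1}]=[\mathcal W_{-k},\mathcal W_1]=(\tilde{\mathcal G}_{k+1}-\mathcal G_{k+1})/(q+q^{-1})$; $[\mathcal W_0,\mathcal G_{k+1}]_q=[\tilde{\mathcal G}_{k+1},\mathcal W_0]_q=\rho\mathcal W_{-k-1}-\rho\mathcal W_{k+1}$; $[\mathcal G_{k+1},\mathcal W_1]_q=[\mathcal W_1,\tilde{\mathcal G}_{k+1}]_q=\rho\mathcal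 W_{k+2}-\rho\mathcal W_{-k}$; $[\mathcal W_{-k},\mathcal W_{-\ell}]=0$, $[\mathcal W_{k+1},\mathcal W_{\ell+1}]=0$; $[\mathcal W_{-k},\mathcal W_{\ell+1}]+[\mathcal W_{k+1},\mathcal W_{-\ell}]=0$; $[\mathcal W_{-k},\mathcal G_{\ell+1}]+[\mathcal G_{k+1},\mathcal W_{-\ell}]=0$; $[\mathcal W_{-k},\tilde{\mathcal G}_{\ell+1}]+[\tilde{\mathcal G}_{k+1},\mathcal W_{-\ell}]=0$; $[\mathcal W_{k+1},\mathcal G_{\ell+1}]+[\mathcal G_{k+1},\mathcal W_{\ell+1}]=0$; $[\mathcal W_{k+1},\tilde{\mathcal G}_{\ell+1}]+[\tilde{\mathcal G}_{k+1},\mathcal W_{\ell+1}]=0$; $[\mathcal G_{k+1},\mathcal G_{\ell+1}]=0$, $[\tilde{\mathcal G}_{k+1},\tilde{\mathcal G}_{\ell+1}]=0$; $[\tilde{\mathcal G}_{k+1},\mathcal G_{\ell+1}]+[\mathcal G_{k+1},\tilde{\mathcal G}_{\ell+1}]=0$. Convention: $\mathcal G_0=-(q-q^{-1})[2]_q^2$. Define $\tilde B_\delta=q^{-2}\mathcal W_0\mathcal W_1-\mathcal W_1\mathcal W_0$; $\tilde B_{\alpha_0}=\mathcal W_1$, $\tilde B_{\delta+\alpha_0}=\mathcal W_0+\frac{q[\tilde B_\delta,\mathcal W_1]}{(q-q^{-1})(q^2-q^{-2})}$, $\tilde B_{n\delta+\alpha_0}=\tilde B_{(n-2)\delta+\alpha_0}+\frac{q[\tilde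 B_\delta,\tilde B_{(n-1)\delta+\alpha_0}]}{(q-q^{-1})(q^2-q^{-2})}$ for $n\ge2$; $\tilde B_{\alpha_1}=\mathcal W_0$, $\tilde B_{\delta+\alpha_1}=\mathcal W_1-\frac{q[\tilde B_\delta,\mathcal W_0]}{(q-q^{-1})(q^2-q^{-2})}$, $\tilde B_{n\delta+\alpha_1}=\tilde B_{(n-2)\delta+\alpha_1}-\frac{q[\tilde B_\delta,\tilde B_{(n-1)\delta+\alpha_1}]}{(q-q^{-1})(q^2-q^{-2})}$ for $n\ge2$. For negative integers $k$, set $\tilde B_{k\delta+\alpha_0}=\tilde B_{(-k-1)\delta+\alpha_1}$ and $\tilde B_{k\delta+\alpha_1}=\tilde B_{(-k-1)\delta+\alpha_0}$. *)

theory Defs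
  imports Main
begin

text \<open>An associative unital algebra over a field 'f is modelled as a ring 'a together
with a unital ring homomorphism phi : 'f -> 'a with central image (the structure map).\<close>

definition alg_map :: "('f::field \<Rightarrow> 'a::ring_1) \<Rightarrow> bool" where
  "alg_map phi \<longleftrightarrow> phi 1 = 1 \<and> (\<forall>a b. phi (a + b) = phi a + phi b)
     \<and> (\<forall>a b. phi (a * b) = phi a * phi b) \<and> (\<forall>c x. phi c * x = x * phi c)"

definition not_root_of_unity :: "'f::field \<Rightarrow> bool" where
  "not_root_of_unity q \<longleftrightarrow> q \<noteq> 0 \<and> (\<forall>n::nat. n > 0 \<longrightarrow> q ^ n \<noteq> 1)"

definition qint :: "'f::field \<Rightarrow> int \<Rightarrow> 'f" where
  "qint q n = (q powi n - q powi (-n)) / (q - inverse q)"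

definition comm :: "'a::ring \<Rightarrow> 'a \<Rightarrow> 'a" where
  "comm X Y = X * Y - Y * X"

definition qcomm :: "('f::field \<Rightarrow> 'a::ring_1) \<Rightarrow> 'f \<Rightarrow> 'a \<Rightarrow> 'a \<Rightarrow> 'a" where
  "qcomm phi q X Y = phi q * X * Y - phi (inverse q) * Y * X"

definition rho :: "'f::field \<Rightarrow> 'f" where
  "rho q = - ((q^2 - inverse (q^2))^2)"

text \<open>Defining relations of O_q. Generators: W (- k) = W_{-k}, W (k+1) = W_{k+1},
  G (k+1) = G_{k+1}, Gt (k+1) = tilde G_{k+1}, for k in N (values G 0, Gt 0 are irrelevant).\<close>

definition Oq_rels :: "('f::field \<Rightarrow> 'a::ring_1) \<Rightarrow> 'f \<Rightarrow> (int \<Rightarrow> 'a) \<Rightarrow> (nat \<Rightarrow> 'a) \<Rightarrow> (nat \<Rightarrow> 'a) \<Rightarrow> bool" where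
  "Oq_rels phi q W G Gt \<longleftrightarrow> (\<forall>k l :: nat.
     comm (W 0) (W (int k + 1)) = phi (inverse (q + inverse q)) * (Gt (k+1) - G (k+1)) \<and>
     comm (W (- int k)) (W 1) = phi (inverse (q + inverse q)) * (Gt (k+1) - G (k+1)) \<and>
     qcomm phi q (W 0) (G (k+1)) = phi (rho q) * W (- int k - 1) - phi (rho q) * W (int k + 1) \<and>
     qcomm phi q (Gt (k+1)) (W 0) = phi (rho q) * W (- int k - 1) - phi (rho q) * W (int k + 1) \<and>
     qcomm phi q (G (k+1)) (W 1) = phi (rho q) * W (int k + 2) - phi (rho q) * W (- int k) \<and>
     qcomm phi q (W 1) (Gt (k+1)) = phi (rho q) * W (int k + 2) - phi (rho q) * W (- int k) \<and>
     comm (W (- int k)) (W (- int l)) = 0 \<and>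
     comm (W (int k + 1)) (W (int l + 1)) = 0 \<and>
     comm (W (- int k)) (W (int l + 1)) + comm (W (int k + 1)) (W (- int l)) = 0 \<and>
     comm (W (- int k)) (G (l+1)) + comm (G (k+1)) (W (- int l)) = 0 \<and>
     comm (W (- int k)) (Gt (l+1)) + comm (Gt (k+1)) (W (- int l)) = 0 \<and>
     comm (W (int k + 1)) (G (l+1)) + comm (G (k+1)) (W (int l + 1)) = 0 \<and>
     comm (W (int k + 1)) (Gt (l+1)) + comm (Gt (k+1)) (W (int l + 1)) = 0 \<and>
     comm (G (k+1)) (G (l+1)) = 0 \<and>
     comm (Gt (k+1)) (Gt (l+1)) = 0 \<and>
     comm (Gt (k+1)) (G (l+1)) + comm (G (k+1)) (Gt (l+1)) = 0)"

definition Gconv :: "('f::field \<Rightarrow> 'a::ring_1) \<Rightarrow> 'f \<Rightarrow> (nat \<Rightarrow> 'a) \<Rightarrow> nat \<Rightarrow> 'a" where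
  "Gconv phi q G n = (if n = 0 then phi (- (q - inverse q) * (qint q 2)^2) else G n)"

definition Bdelta :: "('f::field \<Rightarrow> 'a::ring_1) \<Rightarrow> 'f \<Rightarrow> 'a \<Rightarrow> 'a \<Rightarrow> 'a" where
  "Bdelta phi q W0 W1 = phi (inverse (q^2)) * W0 * W1 - W1 * W0"

definition Bcoef :: "'f::field \<Rightarrow> 'f" where
  "Bcoef q = q / ((q - inverse q) * (q^2 - inverse (q^2)))"

text \<open>Ba0 n = tilde B_{n delta + alpha_0}, Ba1 n = tilde B_{n delta + alpha_1} for n in N.\<close>
fun Ba0 :: "('f::field \<Rightarrow> 'a::ring_1) \<Rightarrow> 'f \<Rightarrow> 'a \<Rightarrow> 'a \<Rightarrow> nat \<Rightarrow> 'a" where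
  "Ba0 phi q W0 W1 0 = W1"
| "Ba0 phi q W0 W1 (Suc 0) = W0 + phi (Bcoef q) * comm (Bdelta phi q W0 W1) W1"
| "Ba0 phi q W0 W1 (Suc (Suc n)) = Ba0 phi q W0 W1 n
     + phi (Bcoef q) * comm (Bdelta phi q W0 W1) (Ba0 phi q W0 W1 (Suc n))"

fun Ba1 :: "('f::field \<Rightarrow> 'a::ring_1) \<Rightarrow> 'f \<Rightarrow> 'a \<Rightarrow> 'a \<Rightarrow> nat \<Rightarrow> 'a" where
  "Ba1 phi q W0 W1 0 = W0"
| "Ba1 phi q W0 W1 (Suc 0) = W1 - phi (Bcoef q) * comm (Bdelta phi q W0 W1) W0"
| "Ba1 phi q W0 W1 (Suc (Suc n)) = Ba1 phi q W0 W1 n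
     - phi (Bcoef q) * comm (Bdelta phi q W0 W1) (Ba1 phi q W0 W1 (Suc n))"

text \<open>Integer-indexed: Bt0 k = tilde B_{k delta + alpha_0}, Bt1 k = tilde B_{k delta + alpha_1},
  with tilde B_{k delta+alpha_0} = tilde B_{(-k-1) delta + alpha_1} for k < 0 and vice versa.\<close>
definition Bt0 :: "('f::field \<Rightarrow> 'a::ring_1) \<Rightarrow> 'f \<Rightarrow> 'a \<Rightarrow> 'a \<Rightarrow> int \<Rightarrow> 'a" where
  "Bt0 phi q W0 W1 k = (if k \<ge> 0 then Ba0 phi q W0 W1 (nat k) else Ba1 phi q W0 W1 (nat (- k - 1)))"

definition Bt1 :: "('f::field \<Rightarrow> 'a::ring_1) \<Rightarrow> 'f \<Rightarrow> 'a \<Rightarrow> 'a \<Rightarrow> int \<Rightarrow> 'a" where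
  "Bt1 phi q W0 W1 k = (if k \<ge> 0 then Ba1 phi q W0 W1 (nat k) else Ba0 phi q W0 W1 (nat (- k - 1)))"

end

theory Submission
  imports Defs
begin

text \<open>
  Write b = [2]_q, c = q - q^-1, D = tilde B_delta and kappa = q / (c (q^2 - q^-2)). Through the
  convention for negative indices, the two recursions defining the tilde B's glue into one
  recurrence X (m + 1) = X (m - 1) + kappa [D, X m] for X m = tilde B_{m delta + alpha_0}, m in Z.
  By Pascal's rule the binomial sums Y_pos k = sum_l C(k,l) q^(2l-k) X (k - 2l) and Y_neg k, the
  same sum of X (. - 1) (the alpha_1 sum of the statement after l -> k - l), then satisfy
  Y_pos (k+1) = b Y_neg k + q^-1 kappa [D, Y_pos k] and Y_neg (k+1) = b Y_pos k - q kappa [D, Y_neg k].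
  The relations make D commute with every G_k, so the convolutions
  S_pos n = sum_k b^(-k-2) G_(n-k) Y_pos k and S_neg n (built from Y_neg) obey the same coupled
  recurrence up to the terms b^-2 G_(n+1) W_1 and b^-2 G_(n+1) W_0. Finally the relations express
  both c G_(n+1) W_1 and [D, W_(n+1)] through one element built from F = [W_(-n), W_1] (likewise
  for W_0 and W_(-n)); these contributions cancel, and by induction S_pos n = -c W_(n+1) and
  S_neg n = -c W_(-n).
\<close>

lemma comm_diff_right: "comm d (x - y) = comm d x - comm d y"
  by (simp add: comm_def algebra_simps)

lemma comm_diff_left: "comm (x - y) d = comm x d - comm y d"
  by (simp add: comm_def algebra_simps)

lemma comm_sum_right: "comm d (\<Sum>i\<in>A. f i) = (\<Sum>i\<in>A. comm d (f i))"
  by (simp add: comm_def sum_distrib_left sum_distrib_right sum_subtractf)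

lemma comm_mult_left_commuting: "g * d = d * g \<Longrightarrow> comm d (g * x) = g * comm d x"
  by (simp add: comm_def right_diff_distrib mult.assoc[symmetric])

lemma sum_atMost_Suc_choose:
  fixes f :: "nat \<Rightarrow> 'a::semiring_1"
  shows "(\<Sum>l\<le>Suc k. of_nat (Suc k choose l) * f l)
       = (\<Sum>l\<le>k. of_nat (k choose l) * (f l + f (Suc l)))"
proof -
  have "(\<Sum>l\<le>k. of_nat (k choose l) * f l) = (\<Sum>l\<le>Suc k. of_nat (k choose l) * f l)"
    by (simp add: binomial_eq_0)
  also have "\<dots> = f 0 + (\<Sum>l\<le>k. of_nat (k choose Suc l) * f (Suc l))"
    by (simp only: sum.atMost_Suc_shift) simp
  finally have shift: "(\<Sum>l\<le>k. of_nat (k choose l) * f l)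
      = f 0 + (\<Sum>l\<le>k. of_nat (k choose Suc l) * f (Suc l))" .
  have "(\<Sum>l\<le>Suc k. of_nat (Suc k choose l) * f l)
      = f 0 + (\<Sum>l\<le>k. of_nat (k choose l) * f (Suc l))
            + (\<Sum>l\<le>k. of_nat (k choose Suc l) * f (Suc l))"
    by (simp only: sum.atMost_Suc_shift) (simp add: sum.distrib distrib_right add.assoc)
  then show ?thesis
    by (simp add: shift sum.distrib distrib_left add_ac)
qed

lemma mult_inverse_cancel_left:
  fixes q :: "'f::field"
  assumes "q \<noteq> 0"
  shows "q * (inverse q * z) = z" and "inverse q * (q * z) = z"
  using assms by (simp_all add: mult.assoc[symmetric])

lemma Bt0_0: "Bt0 phi q w0 w1 0 = w1"
  and Bt0_minus_1: "Bt0 phi q w0 w1 (- 1) = w0"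
  by (simp_all add: Bt0_def)

lemma Gconv_Suc: "Gconv phi q G (Suc n) = G (Suc n)"
  by (simp add: Gconv_def)

lemma Bt1_eq_Bt0: "Bt1 phi q w0 w1 j = Bt0 phi q w0 w1 (- j - 1)"
  by (simp add: Bt0_def Bt1_def)

lemma Bt0_recurrence:
  "Bt0 phi q w0 w1 (m + 1) = Bt0 phi q w0 w1 (m - 1)
     + phi (Bcoef q) * comm (Bdelta phi q w0 w1) (Bt0 phi q w0 w1 m)"
proof -
  have at_nat: "Bt0 phi q w0 w1 (int j) = Ba0 phi q w0 w1 j"
    and at_neg: "Bt0 phi q w0 w1 (- int j - 1) = Ba1 phi q w0 w1 j" for j
    by (simp_all add: Bt0_def)
  have "(\<exists>j. m = int (Suc j)) \<or> m = 0 \<or> m = -1 \<or> (\<exists>j. m = - int (Suc j) - 1)"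
    by presburger
  then consider (pos) j where "m = int (Suc j)" | (zero) "m = 0" | (minus_one) "m = -1"
    | (neg) j where "m = - int (Suc j) - 1"
    by blast
  then show ?thesis
  proof cases
    case pos
    then have "m + 1 = int (Suc (Suc j))" "m - 1 = int j" by simp_all
    with pos show ?thesis by (simp only: at_nat Ba0.simps)
  next
    case zero
    then have "m + 1 = int (Suc 0)" "m - 1 = - int 0 - 1" "m = int 0" by simp_all
    then show ?thesis by (simp only: at_nat at_neg Ba0.simps Ba1.simps)
  next
    case minus_one
    then have "m + 1 = int 0" "m - 1 = - int (Suc 0) - 1" "m = - int 0 - 1" by simp_all
    then show ?thesis by (simp only: at_nat at_neg Ba0.simps Ba1.simps) simp
  next
    case neg
    then have "m + 1 = - int j - 1" "m - 1 = - int (Suc (Suc j)) - 1" by simp_all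
    with neg show ?thesis by (simp only: at_neg Ba1.simps) simp
  qed
qed

locale field_algebra =
  fixes phi :: "'f::field \<Rightarrow> 'a::ring_1"
  assumes alg_map: "alg_map phi"
begin

lemma phi_1 [simp]: "phi 1 = 1"
  and phi_add: "phi (a + b) = phi a + phi b"
  and phi_mult: "phi (a * b) = phi a * phi b"
  and phi_central: "phi c * x = x * phi c"
  using alg_map unfolding alg_map_def by blast+

lemma phi_0 [simp]: "phi 0 = 0"
  using phi_add[of 0 0] by simp

lemma phi_minus [simp]: "phi (- a) = - phi a"
proof -
  have "phi a + phi (- a) = 0"
    using phi_add[of a "- a"] by simp
  then show ?thesis
    by (simp add: add_eq_0_iff)
qed

lemma phi_of_nat [simp]: "phi (of_nat n) = of_nat n"
  by (induction n) (simp_all add: phi_add)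

lemma phi_diff: "phi (a - b) = phi a - phi b"
  using phi_add[of a "- b"] by simp

text \<open>Simp normal form: the scalars of a product are collected into one factor
  \<^term>\<open>phi c\<close> at its front.\<close>

lemma phi_mult_phi [simp]: "phi a * phi b = phi (a * b)"
  by (simp only: phi_mult)

lemma phi_mult_phi_left [simp]: "phi a * (phi b * x) = phi (a * b) * x"
  by (simp only: phi_mult mult.assoc)

lemma mult_phi_commute [simp]: "NO_MATCH (phi d) x \<Longrightarrow> x * phi c = phi c * x"
  by (rule phi_central[symmetric])

lemma mult_phi_left_commute [simp]: "NO_MATCH (phi d) x \<Longrightarrow> x * (phi c * y) = phi c * (x * y)"
  by (simp only: mult.assoc[symmetric] phi_central[of c x])

lemma phi_cancel_left:
  assumes "c \<noteq> 0" and "phi c * x = phi c * y"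
  shows "x = y"
proof -
  have "phi (inverse c) * (phi c * x) = phi (inverse c) * (phi c * y)"
    using assms(2) by simp
  then show ?thesis
    using assms(1) by simp
qed

lemma comm_phi_right [simp]: "comm d (phi c * x) = phi c * comm d x"
  by (simp add: comm_def algebra_simps)

lemma comm_phi_left [simp]: "comm (phi c * x) d = phi c * comm x d"
  by (simp add: comm_def algebra_simps)

section \<open>Binomial sums and weighted convolutions\<close>

definition binom_sum :: "'f \<Rightarrow> (int \<Rightarrow> 'a) \<Rightarrow> nat \<Rightarrow> 'a" where
  "binom_sum t f k =
     (\<Sum>l\<le>k. phi (of_nat (k choose l) * t powi (2 * int l - int k)) * f (int k - 2 * int l))"

lemma binom_sum_add: "binom_sum t (\<lambda>m. f m + g m) k = binom_sum t f k + binom_sum t g k"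
  by (simp add: binom_sum_def distrib_left sum.distrib)

lemma binom_sum_diff: "binom_sum t (\<lambda>m. f m - g m) k = binom_sum t f k - binom_sum t g k"
  by (simp add: binom_sum_def right_diff_distrib sum_subtractf)

lemma binom_sum_scale: "binom_sum t (\<lambda>m. phi a * f m) k = phi a * binom_sum t f k"
  by (simp add: binom_sum_def sum_distrib_left mult.commute)

lemma binom_sum_comm: "binom_sum t (\<lambda>m. comm d (f m)) k = comm d (binom_sum t f k)"
  by (simp only: binom_sum_def comm_sum_right comm_phi_right)

lemma binom_sum_Suc:
  assumes "t \<noteq> 0"
  shows "binom_sum t f (Suc k) = binom_sum t (\<lambda>m. phi (inverse t) * f (m + 1) + phi t * f (m - 1)) k"
proof -
  define h where "h l = phi (t powi (2 * int l - int (Suc k))) * f (int (Suc k) - 2 * int l)" for l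
  have split_of_nat: "phi (of_nat c * x) * y = of_nat c * (phi x * y)" for c x y
    by (simp only: phi_mult phi_of_nat mult.assoc)
  have "h l + h (Suc l) = phi (t powi (2 * int l - int k))
          * (phi (inverse t) * f (int k - 2 * int l + 1) + phi t * f (int k - 2 * int l - 1))" for l
  proof -
    have "t powi (2 * int l - int (Suc k)) = inverse t * t powi (2 * int l - int k)"
      and "t powi (2 * int (Suc l) - int (Suc k)) = t * t powi (2 * int l - int k)"
      using assms by (simp_all add: power_int_diff power_int_add field_simps)
    moreover have "int (Suc k) - 2 * int l = int k - 2 * int l + 1"
      and "int (Suc k) - 2 * int (Suc l) = int k - 2 * int l - 1"
      by simp_all
    ultimately show ?thesis
      by (simp add: h_def algebra_simps)
  qed
  then have "(\<Sum>l\<le>k. of_nat (k choose l) * (h l + h (Suc l)))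
      = binom_sum t (\<lambda>m. phi (inverse t) * f (m + 1) + phi t * f (m - 1)) k"
    by (simp only: binom_sum_def split_of_nat)
  moreover have "binom_sum t f (Suc k) = (\<Sum>l\<le>Suc k. of_nat (Suc k choose l) * h l)"
    unfolding binom_sum_def h_def split_of_nat ..
  ultimately show ?thesis
    by (simp only: sum_atMost_Suc_choose)
qed

lemma binom_sum_reflect: "binom_sum (inverse t) f = binom_sum t (\<lambda>m. f (- m))"
proof (rule ext)
  fix k
  have "binom_sum (inverse t) f k = (\<Sum>l\<le>k. phi (of_nat (k choose (k - l))
          * inverse t powi (2 * int (k - l) - int k)) * f (int k - 2 * int (k - l)))"
    unfolding binom_sum_def using sum.atLeastAtMost_rev[where n = 0 and m = k]
    by (simp only: atLeast0AtMost add_0_right)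
  also have "\<dots> = binom_sum t (\<lambda>m. f (- m)) k"
    unfolding binom_sum_def
  proof (rule sum.cong[OF refl])
    fix l assume "l \<in> {..k}"
    then have "l \<le> k" by simp
    then have "k choose (k - l) = k choose l"
      and "2 * int (k - l) - int k = - (2 * int l - int k)"
      and "int k - 2 * int (k - l) = - (int k - 2 * int l)"
      by (simp_all add: binomial_symmetric[symmetric] of_nat_diff)
    then show "phi (of_nat (k choose (k - l)) * inverse t powi (2 * int (k - l) - int k))
          * f (int k - 2 * int (k - l))
        = phi (of_nat (k choose l) * t powi (2 * int l - int k)) * f (- (int k - 2 * int l))"
      by (simp only: power_int_minus power_int_inverse inverse_inverse_eq)
  qed
  finally show "binom_sum (inverse t) f k = binom_sum t (\<lambda>m. f (- m)) k" .
qed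

lemma binom_sum_0: "binom_sum t f 0 = f 0"
  by (simp add: binom_sum_def)

lemma binom_sum_Suc_of_recurrence:
  assumes "t \<noteq> 0"
    and recurrence: "\<And>m. X (m + 1) = X (m - 1) + phi \<kappa> * comm d (X m)"
  shows "binom_sum t X (Suc k) = phi (t + inverse t) * binom_sum t (\<lambda>m. X (m - 1)) k
           + phi (inverse t * \<kappa>) * comm d (binom_sum t X k)"
    and "binom_sum t (\<lambda>m. X (m - 1)) (Suc k) = phi (t + inverse t) * binom_sum t X k
           - phi (t * \<kappa>) * comm d (binom_sum t (\<lambda>m. X (m - 1)) k)"
proof -
  have "phi (inverse t) * X (m + 1) + phi t * X (m - 1)
      = phi (t + inverse t) * X (m - 1) + phi (inverse t * \<kappa>) * comm d (X m)" for m
    unfolding recurrence by (simp add: algebra_simps phi_add)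
  then show "binom_sum t X (Suc k) = phi (t + inverse t) * binom_sum t (\<lambda>m. X (m - 1)) k
           + phi (inverse t * \<kappa>) * comm d (binom_sum t X k)"
    by (simp only: binom_sum_Suc[OF \<open>t \<noteq> 0\<close>] binom_sum_add binom_sum_scale binom_sum_comm)
  have "phi (inverse t) * X (m + 1 - 1) + phi t * X (m - 1 - 1)
      = phi (t + inverse t) * X m - phi (t * \<kappa>) * comm d (X (m - 1))" for m
  proof -
    have "X m = X (m - 2) + phi \<kappa> * comm d (X (m - 1))"
      using recurrence[of "m - 1"] by simp
    then show ?thesis
      by (simp add: algebra_simps phi_add)
  qed
  then show "binom_sum t (\<lambda>m. X (m - 1)) (Suc k) = phi (t + inverse t) * binom_sum t X k
           - phi (t * \<kappa>) * comm d (binom_sum t (\<lambda>m. X (m - 1)) k)"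
    by (simp only: binom_sum_Suc[OF \<open>t \<noteq> 0\<close>] binom_sum_diff binom_sum_scale binom_sum_comm)
qed

definition conv_sum :: "'f \<Rightarrow> (nat \<Rightarrow> 'a) \<Rightarrow> (nat \<Rightarrow> 'a) \<Rightarrow> nat \<Rightarrow> 'a" where
  "conv_sum s g Y n = (\<Sum>k\<le>n. phi (s powi (- int k - 2)) * g (n - k) * Y k)"

lemma conv_sum_0: "conv_sum s g Y 0 = phi (s powi -2) * (g 0 * Y 0)"
  by (simp add: conv_sum_def mult.assoc)

lemma conv_sum_Suc:
  assumes "s \<noteq> 0"
  shows "conv_sum s g Y (Suc n)
       = phi (s powi -2) * (g (Suc n) * Y 0) + phi (inverse s) * conv_sum s g (\<lambda>k. Y (Suc k)) n"
proof -
  have power_Suc: "s powi (- int (Suc k) - 2) = inverse s * s powi (- int k - 2)" for k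
  proof -
    have "- int (Suc k) - 2 = (- int k - 2) - 1"
      by simp
    moreover have "s powi (j - 1) = inverse s * s powi j" for j
      using assms by (simp add: power_int_diff divide_inverse mult.commute)
    ultimately show ?thesis
      by (simp only:)
  qed
  show ?thesis
    unfolding conv_sum_def sum.atMost_Suc_shift power_Suc by (simp add: sum_distrib_left mult.assoc)
qed

lemma conv_sum_add: "conv_sum s g (\<lambda>k. Y k + Z k) n = conv_sum s g Y n + conv_sum s g Z n"
  by (simp add: conv_sum_def algebra_simps sum.distrib)

lemma conv_sum_diff: "conv_sum s g (\<lambda>k. Y k - Z k) n = conv_sum s g Y n - conv_sum s g Z n"
  by (simp add: conv_sum_def algebra_simps sum_subtractf)

lemma conv_sum_scale: "conv_sum s g (\<lambda>k. phi a * Y k) n = phi a * conv_sum s g Y n"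
  by (simp add: conv_sum_def sum_distrib_left mult.assoc mult.commute)

lemma conv_sum_comm:
  assumes "\<And>j. g j * d = d * g j"
  shows "conv_sum s g (\<lambda>k. comm d (Y k)) n = comm d (conv_sum s g Y n)"
  unfolding conv_sum_def comm_sum_right
  by (simp only: mult.assoc comm_phi_right comm_mult_left_commuting[OF assms])

lemma conv_sum_binom_sum_Suc:
  assumes "t \<noteq> 0" and b: "b = t + inverse t" "b \<noteq> 0"
    and recurrence: "\<And>m. X (m + 1) = X (m - 1) + phi \<kappa> * comm d (X m)"
    and commute: "\<And>j. g j * d = d * g j"
  shows "conv_sum b g (binom_sum t X) (Suc n)
       = phi (b powi -2) * (g (Suc n) * X 0) + conv_sum b g (binom_sum t (\<lambda>m. X (m - 1))) n
         + phi (inverse b * (inverse t * \<kappa>)) * comm d (conv_sum b g (binom_sum t X) n)"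
    and "conv_sum b g (binom_sum t (\<lambda>m. X (m - 1))) (Suc n)
       = phi (b powi -2) * (g (Suc n) * X (- 1)) + conv_sum b g (binom_sum t X) n
         - phi (inverse b * (t * \<kappa>)) * comm d (conv_sum b g (binom_sum t (\<lambda>m. X (m - 1))) n)"
proof -
  have cancel: "phi (inverse b) * (phi b * A + phi e * C) = A + phi (inverse b * e) * C"
    and cancel': "phi (inverse b) * (phi b * A - phi e * C) = A - phi (inverse b * e) * C" for A C e
    using \<open>b \<noteq> 0\<close> by (simp_all add: distrib_left right_diff_distrib)
  note recurrences = binom_sum_Suc_of_recurrence[OF \<open>t \<noteq> 0\<close> recurrence, folded b(1)]
  show "conv_sum b g (binom_sum t X) (Suc n)
       = phi (b powi -2) * (g (Suc n) * X 0) + conv_sum b g (binom_sum t (\<lambda>m. X (m - 1))) n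
         + phi (inverse b * (inverse t * \<kappa>)) * comm d (conv_sum b g (binom_sum t X) n)"
    by (simp only: conv_sum_Suc[OF \<open>b \<noteq> 0\<close>] binom_sum_0 recurrences conv_sum_add
        conv_sum_scale conv_sum_comm[OF commute] cancel add.assoc)
  show "conv_sum b g (binom_sum t (\<lambda>m. X (m - 1))) (Suc n)
       = phi (b powi -2) * (g (Suc n) * X (- 1)) + conv_sum b g (binom_sum t X) n
         - phi (inverse b * (t * \<kappa>)) * comm d (conv_sum b g (binom_sum t (\<lambda>m. X (m - 1))) n)"
    by (simp only: conv_sum_Suc[OF \<open>b \<noteq> 0\<close>] binom_sum_0 recurrences conv_sum_diff
        conv_sum_scale conv_sum_comm[OF commute] cancel' add_diff_eq diff_0 minus_int_code)
qed

lemma double_sum_eq_conv_sum: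
  "(\<Sum>k\<le>n. \<Sum>l\<le>k. phi (of_nat (k choose l) * t powi (2 * int l - int k) * s powi (- int k - 2))
        * g (n - k) * f (int k - 2 * int l))
   = conv_sum s g (binom_sum t f) n"
  by (simp add: conv_sum_def binom_sum_def sum_distrib_left mult.assoc mult_ac)

lemma double_sum_reflect_eq_conv_sum:
  "(\<Sum>k\<le>n. \<Sum>l\<le>k. phi (of_nat (k choose l) * t powi (int k - 2 * int l) * s powi (- int k - 2))
        * g (n - k) * f (int k - 2 * int l))
   = conv_sum s g (binom_sum t (\<lambda>m. f (- m))) n"
proof -
  have "t powi (int k - 2 * int l) = inverse t powi (2 * int l - int k)" for k l
    by (simp only: power_int_inverse power_int_minus[symmetric] minus_diff_eq)
  then show ?thesis
    by (simp only: double_sum_eq_conv_sum binom_sum_reflect)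
qed

lemma mult_eq_of_qcomm_pair_right:
  assumes "q \<noteq> 0" "q + inverse q \<noteq> 0"
    and g': "g' = g + phi (q + inverse q) * f"
    and "qcomm phi q g w = r" and "qcomm phi q w g' = r"
  shows "phi (q - inverse q) * (g * w) = r - (w * f - phi (inverse (q^2)) * (f * w))"
proof (rule phi_cancel_left[OF \<open>q + inverse q \<noteq> 0\<close>])
  have "phi (q + inverse q) * (phi (q - inverse q) * (g * w))
      = phi q * qcomm phi q g w + phi (inverse q) * qcomm phi q w g'
        - phi (q + inverse q) * (w * f - phi (inverse (q^2)) * (f * w))"
    using \<open>q \<noteq> 0\<close> unfolding g' qcomm_def
    by (simp add: algebra_simps phi_add phi_diff mult_inverse_cancel_left power2_eq_square)
  then show "phi (q + inverse q) * (phi (q - inverse q) * (g * w))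
      = phi (q + inverse q) * (r - (w * f - phi (inverse (q^2)) * (f * w)))"
    unfolding assms(4,5) by (simp add: algebra_simps phi_add)
qed

lemma mult_eq_of_qcomm_pair_left:
  assumes "q \<noteq> 0" "q + inverse q \<noteq> 0"
    and g': "g' = g + phi (q + inverse q) * f"
    and "qcomm phi q w g = r" and "qcomm phi q g' w = r"
  shows "phi (q - inverse q) * (g * w) = r - phi (q^2) * (f * w - phi (inverse (q^2)) * (w * f))"
proof (rule phi_cancel_left[OF \<open>q + inverse q \<noteq> 0\<close>])
  have "phi (q + inverse q) * (phi (q - inverse q) * (g * w))
      = phi (inverse q) * qcomm phi q w g + phi q * qcomm phi q g' w
        - phi (q + inverse q) * (phi (q^2) * (f * w - phi (inverse (q^2)) * (w * f)))"
    using \<open>q \<noteq> 0\<close> unfolding g' qcomm_def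
    by (simp add: algebra_simps phi_add phi_diff mult_inverse_cancel_left power2_eq_square)
  then show "phi (q + inverse q) * (phi (q - inverse q) * (g * w))
      = phi (q + inverse q) * (r - phi (q^2) * (f * w - phi (inverse (q^2)) * (w * f)))"
    unfolding assms(4,5) by (simp add: algebra_simps phi_add)
qed

lemma qcomm_Bdelta:
  assumes "q \<noteq> 0"
  shows "phi q * comm (Bdelta phi q w0 w1) g = comm (qcomm phi q w0 g) w1 - comm w0 (qcomm phi q g w1)"
proof -
  have "q * inverse (q^2) = inverse q"
    using assms by (simp add: power2_eq_square)
  then show ?thesis
    unfolding comm_def qcomm_def Bdelta_def by (simp add: algebra_simps)
qed

lemma comm_Bdelta_of_commute_right:
  assumes "w1 * a = a * w1"
  shows "comm (Bdelta phi q w0 w1) a = phi (inverse (q^2)) * (comm w0 a * w1) - w1 * comm w0 a"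
proof -
  have "w1 * (a * z) = a * (w1 * z)" for z
    by (simp add: assms flip: mult.assoc)
  then show ?thesis
    unfolding comm_def Bdelta_def by (simp add: algebra_simps assms)
qed

lemma comm_Bdelta_of_commute_left:
  assumes "w0 * a = a * w0"
  shows "comm (Bdelta phi q w0 w1) a = comm a w1 * w0 - phi (inverse (q^2)) * (w0 * comm a w1)"
proof -
  have "w0 * (a * z) = a * (w0 * z)" for z
    by (simp add: assms flip: mult.assoc)
  then show ?thesis
    unfolding comm_def Bdelta_def by (simp add: algebra_simps assms)
qed

text \<open>The scalar identity of the induction step: for rho = -(c b)^2 the two occurrences
  of z cancel.\<close>

lemma rescaled_relation:
  assumes "c \<noteq> 0" "b \<noteq> 0"
    and p: "phi c * p = phi (- ((c * b)^2)) * a - phi (- ((c * b)^2)) * y - z"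
  shows "phi (b powi -2) * p + phi (- c) * y + phi (inverse ((c * b)^2)) * (phi c * z) = phi (- c) * a"
proof (rule phi_cancel_left[OF \<open>c \<noteq> 0\<close>])
  have s1: "b powi -2 * - ((c * b)^2) = - (c * c)" and s2: "c * c * inverse ((c * b)^2) = b powi -2"
    using assms(1,2) by (simp_all add: power_int_minus field_simps power2_eq_square)
  have "phi c * (phi (b powi -2) * p + phi (- c) * y + phi (inverse ((c * b)^2)) * (phi c * z))
      = phi (b powi -2) * (phi c * p) + phi (- (c * c)) * y + phi (c * c * inverse ((c * b)^2)) * z"
    by (simp add: algebra_simps)
  also have "\<dots> = phi (b powi -2) * (phi (- ((c * b)^2)) * a - phi (- ((c * b)^2)) * y - z)
      + phi (- (c * c)) * y + phi (b powi -2) * z"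
    unfolding p s2 ..
  also have "\<dots> = phi (b powi -2 * - ((c * b)^2)) * a - phi (b powi -2 * - ((c * b)^2)) * y
      + phi (- (c * c)) * y"
    by (simp add: algebra_simps)
  also have "\<dots> = phi c * (phi (- c) * a)"
    unfolding s1 by simp
  finally show "phi c * (phi (b powi -2) * p + phi (- c) * y + phi (inverse ((c * b)^2)) * (phi c * z))
      = phi c * (phi (- c) * a)" .
qed

end

section \<open>Consequences of the defining relations\<close>

locale Oq_algebra = field_algebra phi for phi :: "'f::field \<Rightarrow> 'a::ring_1" +
  fixes q :: 'f and W :: "int \<Rightarrow> 'a" and G Gt :: "nat \<Rightarrow> 'a"
  assumes not_root_of_unity: "not_root_of_unity q"
    and relations: "Oq_rels phi q W G Gt"
begin

lemma q_power_ne_1: "n > 0 \<Longrightarrow> q ^ n \<noteq> 1"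
  using not_root_of_unity by (simp add: not_root_of_unity_def)

lemma q_nonzero: "q \<noteq> 0"
  using not_root_of_unity by (simp add: not_root_of_unity_def)

lemma q_minus_inverse_nonzero: "q - inverse q \<noteq> 0"
proof
  assume "q - inverse q = 0"
  then have "q * q = q * inverse q"
    by simp
  then have "q ^ 2 = 1"
    using q_nonzero by (simp add: power2_eq_square)
  with q_power_ne_1[of 2] show False
    by simp
qed

lemma q_plus_inverse_nonzero: "q + inverse q \<noteq> 0"
proof
  assume "q + inverse q = 0"
  then have "q * q = -1"
    using q_nonzero by (simp add: add_eq_0_iff field_simps)
  then have "q ^ 4 = 1"
    by (simp add: power4_eq_xxxx mult.assoc[symmetric])
  with q_power_ne_1[of 4] show False
    by simp
qed

lemma qint_2: "qint q 2 = q + inverse q"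
  using q_nonzero q_minus_inverse_nonzero
  by (simp add: qint_def power_int_minus field_simps power2_eq_square)

lemma qint_2_nonzero: "qint q 2 \<noteq> 0"
  using q_plus_inverse_nonzero by (simp add: qint_2)

lemma q_square_diff: "q^2 - inverse (q^2) = (q - inverse q) * qint q 2"
  using q_nonzero by (simp add: qint_2 power2_eq_square algebra_simps)

lemma rho_eq: "rho q = - (((q - inverse q) * qint q 2)^2)"
  by (simp add: rho_def q_square_diff)

lemma Bcoef_scalars:
  "inverse (qint q 2) * (inverse q * Bcoef q) = inverse (((q - inverse q) * qint q 2)^2)"
  "inverse (qint q 2) * (q * Bcoef q) = q^2 * inverse (((q - inverse q) * qint q 2)^2)"
proof -
  define c b where "c = q - inverse q" and "b = qint q 2"
  have "c \<noteq> 0" "b \<noteq> 0"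
    using q_minus_inverse_nonzero qint_2_nonzero by (simp_all add: c_def b_def)
  moreover have "Bcoef q = q / (c * (c * b))"
    by (simp add: Bcoef_def q_square_diff c_def b_def)
  ultimately show "inverse b * (inverse q * Bcoef q) = inverse ((c * b)^2)"
    and "inverse b * (q * Bcoef q) = q^2 * inverse ((c * b)^2)"
    using q_nonzero by (simp_all add: field_simps power2_eq_square)
qed

lemmas Oq_relations = relations[unfolded Oq_rels_def, rule_format]

lemma
  shows comm_W0_Wpos: "comm (W 0) (W (int k + 1)) = phi (inverse (q + inverse q)) * (Gt (Suc k) - G (Suc k))"
    and comm_Wneg_W1: "comm (W (- int k)) (W 1) = phi (inverse (q + inverse q)) * (Gt (Suc k) - G (Suc k))"
    and qcomm_W0_G: "qcomm phi q (W 0) (G (Suc k))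
      = phi (rho q) * W (- int k - 1) - phi (rho q) * W (int k + 1)"
    and qcomm_Gt_W0: "qcomm phi q (Gt (Suc k)) (W 0)
      = phi (rho q) * W (- int k - 1) - phi (rho q) * W (int k + 1)"
    and qcomm_G_W1: "qcomm phi q (G (Suc k)) (W 1)
      = phi (rho q) * W (int k + 2) - phi (rho q) * W (- int k)"
    and qcomm_W1_Gt: "qcomm phi q (W 1) (Gt (Suc k))
      = phi (rho q) * W (int k + 2) - phi (rho q) * W (- int k)"
    and comm_Wneg_Wneg: "comm (W (- int k)) (W (- int l)) = 0"
    and comm_Wpos_Wpos: "comm (W (int k + 1)) (W (int l + 1)) = 0"
  using Oq_relations[of k l] by simp_all

lemma comm_W0_Wpos_eq: "comm (W 0) (W (int k + 1)) = comm (W (- int k)) (W 1)"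
  by (simp only: comm_W0_Wpos comm_Wneg_W1)

lemma Gt_eq: "Gt (Suc k) = G (Suc k) + phi (q + inverse q) * comm (W (- int k)) (W 1)"
  using q_plus_inverse_nonzero by (simp add: comm_Wneg_W1)

lemma G_mult_W1:
  "phi (q - inverse q) * (G (Suc k) * W 1) = phi (rho q) * W (int k + 2) - phi (rho q) * W (- int k)
     - (W 1 * comm (W (- int k)) (W 1) - phi (inverse (q^2)) * (comm (W (- int k)) (W 1) * W 1))"
  by (rule mult_eq_of_qcomm_pair_right[OF q_nonzero q_plus_inverse_nonzero Gt_eq qcomm_G_W1 qcomm_W1_Gt])

lemma G_mult_W0:
  "phi (q - inverse q) * (G (Suc k) * W 0) = phi (rho q) * W (- int k - 1) - phi (rho q) * W (int k + 1)
     - phi (q^2) * (comm (W (- int k)) (W 1) * W 0 - phi (inverse (q^2)) * (W 0 * comm (W (- int k)) (W 1)))"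
  by (rule mult_eq_of_qcomm_pair_left[OF q_nonzero q_plus_inverse_nonzero Gt_eq qcomm_W0_G qcomm_Gt_W0])

lemma comm_Bdelta_G: "comm (Bdelta phi q (W 0) (W 1)) (G (Suc k)) = 0"
proof (rule phi_cancel_left[OF q_nonzero])
  have "int (Suc k) + 1 = int k + 2" and "- int (Suc k) = - int k - 1"
    by simp_all
  then have "comm (W (- int k - 1)) (W 1) = comm (W 0) (W (int k + 2))"
    using comm_W0_Wpos_eq[of "Suc k"] by (simp only:)
  moreover have "comm (W (int k + 1)) (W 1) = 0"
    using comm_Wpos_Wpos[of k 0] by simp
  moreover have "comm (W 0) (W (- int k)) = 0"
    using comm_Wneg_Wneg[of 0 k] by simp
  ultimately show "phi q * comm (Bdelta phi q (W 0) (W 1)) (G (Suc k)) = phi q * 0"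
    by (simp add: qcomm_Bdelta[OF q_nonzero] qcomm_W0_G qcomm_G_W1 comm_diff_left comm_diff_right
        comm_phi_left)
qed

lemma Gconv_commute_Bdelta:
  "Gconv phi q G j * Bdelta phi q (W 0) (W 1) = Bdelta phi q (W 0) (W 1) * Gconv phi q G j"
proof (cases j)
  case 0
  then show ?thesis
    by (simp add: Gconv_def)
next
  case (Suc k)
  then show ?thesis
    using comm_Bdelta_G[of k] by (simp add: Gconv_def comm_def)
qed

lemma comm_Bdelta_Wpos:
  "comm (Bdelta phi q (W 0) (W 1)) (W (int k + 1))
     = - (W 1 * comm (W (- int k)) (W 1) - phi (inverse (q^2)) * (comm (W (- int k)) (W 1) * W 1))"
proof -
  have "W 1 * W (int k + 1) = W (int k + 1) * W 1"
    using comm_Wpos_Wpos[of 0 k] by (simp add: comm_def)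
  then show ?thesis
    by (simp add: comm_Bdelta_of_commute_right comm_W0_Wpos_eq)
qed

lemma comm_Bdelta_Wneg:
  "comm (Bdelta phi q (W 0) (W 1)) (W (- int k))
     = comm (W (- int k)) (W 1) * W 0 - phi (inverse (q^2)) * (W 0 * comm (W (- int k)) (W 1))"
proof -
  have "W 0 * W (- int k) = W (- int k) * W 0"
    using comm_Wneg_Wneg[of 0 k] by (simp add: comm_def)
  then show ?thesis
    by (rule comm_Bdelta_of_commute_left)
qed

abbreviation S_pos :: "nat \<Rightarrow> 'a" where
  "S_pos \<equiv> conv_sum (qint q 2) (Gconv phi q G) (binom_sum q (Bt0 phi q (W 0) (W 1)))"

abbreviation S_neg :: "nat \<Rightarrow> 'a" where
  "S_neg \<equiv> conv_sum (qint q 2) (Gconv phi q G) (binom_sum q (\<lambda>m. Bt0 phi q (W 0) (W 1) (m - 1)))"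

lemmas S_Suc = conv_sum_binom_sum_Suc[OF q_nonzero qint_2 qint_2_nonzero
    Bt0_recurrence[of phi q "W 0" "W 1"] Gconv_commute_Bdelta]

lemma S_0: "S_pos 0 = phi (- (q - inverse q)) * W 1 \<and> S_neg 0 = phi (- (q - inverse q)) * W 0"
proof -
  have "qint q 2 powi -2 * (- (q - inverse q) * (qint q 2)^2) = - (q - inverse q)"
    using qint_2_nonzero by (simp add: power_int_minus field_simps)
  then have "phi (qint q 2 powi -2) * (Gconv phi q G 0 * x) = phi (- (q - inverse q)) * x" for x
    by (simp only: Gconv_def refl if_True phi_mult_phi_left)
  then show ?thesis
    by (simp add: conv_sum_0 binom_sum_0 Bt0_0 Bt0_minus_1)
qed

lemma S_pos_Suc:
  assumes "S_pos n = phi (- (q - inverse q)) * W (int n + 1)"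
    and "S_neg n = phi (- (q - inverse q)) * W (- int n)"
  shows "S_pos (Suc n) = phi (- (q - inverse q)) * W (int n + 2)"
proof -
  let ?F = "comm (W (- int n)) (W 1)"
  have "S_pos (Suc n) = phi (qint q 2 powi -2) * (G (Suc n) * W 1) + phi (- (q - inverse q)) * W (- int n)
        + phi (inverse (((q - inverse q) * qint q 2)^2))
          * comm (Bdelta phi q (W 0) (W 1)) (phi (- (q - inverse q)) * W (int n + 1))"
    using assms by (simp only: S_Suc(1) Gconv_Suc Bt0_0 Bcoef_scalars)
  also have "\<dots> = phi (qint q 2 powi -2) * (G (Suc n) * W 1) + phi (- (q - inverse q)) * W (- int n)
        + phi (inverse (((q - inverse q) * qint q 2)^2))
          * (phi (q - inverse q) * (W 1 * ?F - phi (inverse (q^2)) * (?F * W 1)))"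
    by (simp only: comm_phi_right comm_Bdelta_Wpos) (simp add: algebra_simps phi_diff)
  also have "\<dots> = phi (- (q - inverse q)) * W (int n + 2)"
    by (rule rescaled_relation[OF q_minus_inverse_nonzero qint_2_nonzero G_mult_W1[unfolded rho_eq]])
  finally show ?thesis .
qed

lemma S_neg_Suc:
  assumes "S_pos n = phi (- (q - inverse q)) * W (int n + 1)"
    and "S_neg n = phi (- (q - inverse q)) * W (- int n)"
  shows "S_neg (Suc n) = phi (- (q - inverse q)) * W (- int n - 1)"
proof -
  let ?F = "comm (W (- int n)) (W 1)"
  have "S_neg (Suc n) = phi (qint q 2 powi -2) * (G (Suc n) * W 0) + phi (- (q - inverse q)) * W (int n + 1)
        - phi (q^2 * inverse (((q - inverse q) * qint q 2)^2))
          * comm (Bdelta phi q (W 0) (W 1)) (phi (- (q - inverse q)) * W (- int n))"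
    using assms by (simp only: S_Suc(2) Gconv_Suc Bt0_minus_1 Bcoef_scalars)
  also have "\<dots> = phi (qint q 2 powi -2) * (G (Suc n) * W 0) + phi (- (q - inverse q)) * W (int n + 1)
        + phi (inverse (((q - inverse q) * qint q 2)^2))
          * (phi (q - inverse q) * (phi (q^2) * (?F * W 0 - phi (inverse (q^2)) * (W 0 * ?F))))"
    by (simp only: comm_phi_right comm_Bdelta_Wneg) (simp add: algebra_simps phi_diff)
  also have "\<dots> = phi (- (q - inverse q)) * W (- int n - 1)"
    by (rule rescaled_relation[OF q_minus_inverse_nonzero qint_2_nonzero G_mult_W0[unfolded rho_eq]])
  finally show ?thesis .
qed

lemma S_eq:
  "S_pos n = phi (- (q - inverse q)) * W (int n + 1) \<and> S_neg n = phi (- (q - inverse q)) * W (- int n)"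
proof (induction n)
  case 0
  then show ?case
    using S_0 by simp
next
  case (Suc n)
  have "int (Suc n) + 1 = int n + 2" and "- int (Suc n) = - int n - 1"
    by simp_all
  with Suc S_pos_Suc S_neg_Suc show ?case
    by (simp only:)
qed

end

theorem proposition12p4:
  fixes phi :: "'f::field \<Rightarrow> 'a::ring_1" and q :: 'f
    and W :: "int \<Rightarrow> 'a" and G Gt :: "nat \<Rightarrow> 'a" and n :: nat
  assumes "alg_map phi"
    and "not_root_of_unity q"
    and "Oq_rels phi q W G Gt"
  shows "(W (int n + 1) = phi (- inverse (q - inverse q)) *
           (\<Sum>k\<le>n. \<Sum>l\<le>k. phi (of_nat (k choose l) * q powi (2 * int l - int k)
               * (qint q 2) powi (- int k - 2)) * Gconv phi q G (n - k)
               * Bt0 phi q (W 0) (W 1) (int k - 2 * int l))) \<and>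
         (W (- int n) = phi (- inverse (q - inverse q)) *
           (\<Sum>k\<le>n. \<Sum>l\<le>k. phi (of_nat (k choose l) * q powi (int k - 2 * int l)
               * (qint q 2) powi (- int k - 2)) * Gconv phi q G (n - k)
               * Bt1 phi q (W 0) (W 1) (int k - 2 * int l)))"
proof -
  interpret Oq_algebra phi q W G Gt
    using assms by (intro Oq_algebra.intro field_algebra.intro Oq_algebra_axioms.intro)
  have "(\<lambda>m. Bt1 phi q (W 0) (W 1) (- m)) = (\<lambda>m. Bt0 phi q (W 0) (W 1) (m - 1))"
    by (simp add: Bt1_eq_Bt0)
  moreover have "phi (- inverse (q - inverse q)) * (phi (- (q - inverse q)) * x) = x" for x
    by (simp only: phi_mult_phi_left minus_mult_minus left_inverse[OF q_minus_inverse_nonzero]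
        phi_1 mult_1_left)
  ultimately show ?thesis
    using S_eq[of n]
    by (simp only: double_sum_eq_conv_sum double_sum_reflect_eq_conv_sum)
qed

end
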